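(* Let $n\ge2$, $y=(y_1,\dots,y_{n-1},q)\in\mathbb C^n$ and $j\in\{1,\dots,[n/2]\}$. Let $\tilde y^j\in\mathbb C^n$ be obtained from $y$ by interchanging the coordinates $y_j$ and $y_{n-j}$ (all other coordinates, including $q$, unchanged). Then $y\in\widetilde{\mathbb G}_n$ if and only if $\tilde y^j\in\widetilde{\mathbb G}_n$, and $y\in\widetilde\Gamma_n$ if and only if $\tilde y^j\in\widetilde\Gamma_n$.
   Context: $\mathbb D$ is the open unit disc. $\widetilde{\mathbb G}_n=\{(y_1,\dots,y_{n-1},q)\in\mathbb C^n: q\in\mathbb D,\ y_j=\beta_j+\bar\beta_{n-j}q$ for some $\beta_j\in\mathbb C$ with $|\beta_j|+|\beta_{n-j}|<\binom{n}{j}$, $j=1,\dots,n-1\}$; $\widetilde\Gamma_n$ is its closure. *)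

theory Defs
  imports "HOL-Analysis.Analysis"
begin

text \<open>A point (y_1,...,y_{n-1},q) of C^n is represented as a function
  y :: nat => complex with y k = y_k for 1 <= k <= n-1, y n = q, and y k = 0
  for k outside {1..n}.\<close>

definition tetrablock_G :: "nat \<Rightarrow> (nat \<Rightarrow> complex) set" where
  "tetrablock_G n = {y. (\<forall>k. k \<notin> {1..n} \<longrightarrow> y k = 0) \<and> norm (y n) < 1 \<and>
     (\<exists>\<beta> :: nat \<Rightarrow> complex. \<forall>j\<in>{1..n-1}.
         y j = \<beta> j + cnj (\<beta> (n - j)) * y n \<and>
         norm (\<beta> j) + norm (\<beta> (n - j)) < real (n choose j))}"

definition tetrablock_Gamma :: "nat \<Rightarrow> (nat \<Rightarrow> complex) set" where
  "tetrablock_Gamma n = closure (tetrablock_G n)"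

definition swap_coords :: "nat \<Rightarrow> nat \<Rightarrow> (nat \<Rightarrow> complex) \<Rightarrow> (nat \<Rightarrow> complex)" where
  "swap_coords a b y = y(a := y b, b := y a)"

end

theory Submission
  imports Defs "HOL-Combinatorics.Transposition"
begin

text \<open>The transposition \<open>\<sigma>\<close> of \<open>j\<close> and \<open>n - j\<close> fixes \<open>n\<close>, commutes with the reflection
  \<open>k \<mapsto> n - k\<close> and preserves \<open>n choose k\<close>; so if \<open>\<beta>\<close> witnesses \<open>y \<in> G\<^sub>n\<close>, then \<open>\<beta> \<circ> \<sigma>\<close>
  witnesses \<open>y \<circ> \<sigma> \<in> G\<^sub>n\<close>, the defining conditions merely being permuted. Being a continuous
  involution, the swap then also preserves the closure \<open>\<Gamma>\<^sub>n\<close>.\<close>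

lemma swap_coords_eq_comp_transpose: "swap_coords a b y = y \<circ> Transposition.transpose a b"
  by (auto simp: swap_coords_def Transposition.transpose_def fun_eq_iff)

lemma continuous_on_swap_coords: "continuous_on S (swap_coords a b)"
  unfolding swap_coords_eq_comp_transpose comp_def
  by (intro continuous_on_coordinatewise_then_product
      continuous_on_subset[OF continuous_on_product_coordinates] subset_UNIV)

lemma transpose_reflect:
  fixes a n k :: nat
  assumes "a \<le> n" and "k \<le> n"
  shows "Transposition.transpose a (n - a) (n - k) = n - Transposition.transpose a (n - a) k"
  using assms unfolding Transposition.transpose_def by auto

lemma binomial_transpose_reflect:
  fixes a n k :: nat
  assumes "a \<le> n" and "k \<le> n"
  shows "n choose Transposition.transpose a (n - a) k = n choose k"
  using assms binomial_symmetric[of a n] binomial_symmetric[of k n]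
  unfolding Transposition.transpose_def by auto

lemma swap_coords_swap_coords [simp]: "swap_coords a b (swap_coords a b y) = y"
  by (simp add: swap_coords_eq_comp_transpose comp_assoc)

lemma swap_coords_tetrablock_G:
  assumes j: "j \<in> {1..n - 1}" and y: "y \<in> tetrablock_G n"
  shows "swap_coords j (n - j) y \<in> tetrablock_G n"
proof -
  define \<sigma> where "\<sigma> = Transposition.transpose j (n - j)"
  from y obtain \<beta> where supp: "\<forall>k. k \<notin> {1..n} \<longrightarrow> y k = 0" and q: "norm (y n) < 1"
    and \<beta>: "\<forall>k\<in>{1..n-1}. y k = \<beta> k + cnj (\<beta> (n - k)) * y n \<and>
         norm (\<beta> k) + norm (\<beta> (n - k)) < real (n choose k)"
    unfolding tetrablock_G_def by blast
  have \<sigma>_fix: "\<sigma> k = k" if "k \<notin> {1..n-1}" for k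
    using j that by (auto simp: \<sigma>_def Transposition.transpose_def)
  have \<sigma>_n: "\<sigma> n = n"
    using j by (intro \<sigma>_fix) auto
  have "y (\<sigma> k) = \<beta> (\<sigma> k) + cnj (\<beta> (\<sigma> (n - k))) * y (\<sigma> n) \<and>
      norm (\<beta> (\<sigma> k)) + norm (\<beta> (\<sigma> (n - k))) < real (n choose k)"
    if k: "k \<in> {1..n-1}" for k
  proof -
    have "\<sigma> k \<in> {1..n-1}"
      using j k by (auto simp: \<sigma>_def Transposition.transpose_def)
    moreover have "\<sigma> (n - k) = n - \<sigma> k" "n choose \<sigma> k = n choose k"
      using j k transpose_reflect binomial_transpose_reflect by (auto simp: \<sigma>_def)
    ultimately show ?thesis
      using \<beta> \<sigma>_n by metis
  qed
  moreover have "(y \<circ> \<sigma>) k = 0" if "k \<notin> {1..n}" for k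
    using that \<sigma>_fix[of k] supp by auto
  ultimately have "y \<circ> \<sigma> \<in> tetrablock_G n"
    using q \<sigma>_n unfolding tetrablock_G_def by (auto intro!: exI[of _ "\<beta> \<circ> \<sigma>"])
  then show ?thesis
    by (simp add: swap_coords_eq_comp_transpose \<sigma>_def)
qed

lemma swap_coords_tetrablock_Gamma:
  assumes "j \<in> {1..n - 1}" and "y \<in> tetrablock_Gamma n"
  shows "swap_coords j (n - j) y \<in> tetrablock_Gamma n"
proof -
  have "swap_coords j (n - j) ` tetrablock_G n \<subseteq> closure (tetrablock_G n)"
    using swap_coords_tetrablock_G[OF assms(1)] closure_subset by blast
  then have "swap_coords j (n - j) ` closure (tetrablock_G n) \<subseteq> closure (tetrablock_G n)"
    by (rule image_closure_subset[OF continuous_on_swap_coords closed_closure])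
  then show ?thesis
    using assms(2) unfolding tetrablock_Gamma_def by blast
qed

theorem mainTheorem4:
  fixes n j :: nat and y :: "nat \<Rightarrow> complex"
  assumes "n \<ge> 2" and "j \<in> {1..n div 2}"
  shows "(y \<in> tetrablock_G n \<longleftrightarrow> swap_coords j (n - j) y \<in> tetrablock_G n) \<and>
         (y \<in> tetrablock_Gamma n \<longleftrightarrow> swap_coords j (n - j) y \<in> tetrablock_Gamma n)"
proof -
  have j: "j \<in> {1..n - 1}"
    using assms by auto
  show ?thesis
    using swap_coords_tetrablock_G[OF j, of y]
      swap_coords_tetrablock_G[OF j, of "swap_coords j (n - j) y"]
      swap_coords_tetrablock_Gamma[OF j, of y]
      swap_coords_tetrablock_Gamma[OF j, of "swap_coords j (n - j) y"]
    by auto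
qed

end
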